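(* Let $\epsilon\in(0,1)$, let $m\ge 1$ and $f\in\mathbb R_+^m$ (entrywise nonnegative), and set $L:=\frac{2}{\epsilon}-1$. Then the function $z\mapsto\mathcal G_\epsilon(z;f)$ on $\mathbb C^m$ is continuously differentiable and its gradient is Lipschitz continuous with constant $L$: $$\|\nabla_z\mathcal G_\epsilon(z;f)-\nabla_z\mathcal G_\epsilon(y;f)\|\le L\|z-y\|\qquad\forall\, z,y\in\mathbb C^m.$$
   Context: For $x\in\mathbb C$ and $b\ge 0$, the smooth truncated amplitude-Gaussian metric is built from $$g_\epsilon(x;b):=\begin{cases}\frac{1-\epsilon}{2}\left(b-\frac{1}{\epsilon}|x|^2\right), & \text{if } |x|<\epsilon\sqrt b,\\[2pt] \frac12\big(|x|-\sqrt b\big)^2, & \text{otherwise,}\end{cases}$$ and for $z\in\mathbb C^m$, $f\in\mathbb R_+^m$, $\mathcal G_\epsilon(z;f):=\sum_{j}g_\epsilon(z(j);f(j))$. Real-valued functions of complex vectors are differentiated by identifying $\mathbb C^m$ with $\mathbb R^{2m}$ (real and imaginary parts); the gradient is the real gradient written back as a complex vector (so e.g. $\nabla_x\frac12(|x|-\sqrt b)^2=(1-\sqrt b/|x|)x$ for $x\neq0$). $\|\cdot\|$ is the Euclidean ($\ell^2$) norm. *)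

theory Defs
  imports "HOL-Analysis.Analysis"
begin

definition g_eps :: "real \<Rightarrow> complex \<Rightarrow> real \<Rightarrow> real" where
  "g_eps \<epsilon> x b =
     (if cmod x < \<epsilon> * sqrt b then (1 - \<epsilon>) / 2 * (b - (1 / \<epsilon>) * (cmod x)\<^sup>2)
      else (1 / 2) * (cmod x - sqrt b)\<^sup>2)"

text \<open>Sum over coordinates; C^m is complex ^ 'm (finite index type 'm), with the
  real Euclidean structure of R^(2m).\<close>
definition G_eps :: "real \<Rightarrow> complex ^ 'm::finite \<Rightarrow> real ^ 'm \<Rightarrow> real" where
  "G_eps \<epsilon> z f = (\<Sum>j\<in>UNIV. g_eps \<epsilon> (z $ j) (f $ j))"

end

theory Submission
  imports Defs
begin

text \<open>
  In each coordinate, g_eps(.; b) is a concave quadratic inside the disc of radius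
  r = \<epsilon> sqrt b and half the squared distance to the circle of radius sqrt b outside it; the two
  pieces agree to first order on the circle, and the gradient is x - (1/\<epsilon>) P x with P the
  metric projection onto the closed disc of radius r. Writing it as
  (1 - 1/\<epsilon>) x + (1/\<epsilon>) (x - P x) and using that x - P x is nonexpansive (P is firmly
  nonexpansive) gives the Lipschitz constant (1/\<epsilon> - 1) + 1/\<epsilon> = 2/\<epsilon> - 1, which passes
  from the coordinates to the Euclidean norm of C^m.
\<close>

lemma closest_point_residual_nonexpansive:
  fixes S :: "'a::{real_inner,heine_borel} set"
  assumes "convex S" "closed S" "S \<noteq> {}"
  shows "1-lipschitz_on UNIV (\<lambda>x. x - closest_point S x)"
proof (rule lipschitz_onI)
  fix x y :: 'a
  define u v where "u = x - y" and "v = closest_point S x - closest_point S y"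
  have "inner (x - closest_point S x) (closest_point S y - closest_point S x) \<le> 0"
    and "inner (y - closest_point S y) (closest_point S x - closest_point S y) \<le> 0"
    by (simp_all add: assms closest_point_dot closest_point_in_set)
  then have firmly_nonexpansive: "inner v v \<le> inner u v"
    by (simp add: u_def v_def inner_diff_left inner_diff_right inner_commute algebra_simps)
  have "(norm (u - v))\<^sup>2 = (norm u)\<^sup>2 - 2 * inner u v + inner v v"
    by (simp add: power2_norm_eq_inner inner_diff_left inner_diff_right inner_commute)
  also have "\<dots> \<le> (norm u)\<^sup>2"
    using firmly_nonexpansive inner_ge_zero[of v] by linarith
  finally have "norm (u - v) \<le> norm u"
    by (rule power2_le_imp_le) simp
  then show "dist (x - closest_point S x) (y - closest_point S y) \<le> 1 * dist x y"
    by (simp add: dist_norm u_def v_def algebra_simps)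
qed simp

lemma lipschitz_on_id_minus_scaled_closest_point:
  fixes S :: "'a::{real_inner,heine_borel} set"
  assumes "convex S" "closed S" "S \<noteq> {}" "1 \<le> c"
  shows "(2 * c - 1)-lipschitz_on UNIV (\<lambda>x. x - c *\<^sub>R closest_point S x)"
proof -
  have "(\<bar>1 - c\<bar> * 1 + \<bar>c\<bar> * 1)-lipschitz_on UNIV
          (\<lambda>x. (1 - c) *\<^sub>R x + c *\<^sub>R (x - closest_point S x))"
    by (intro lipschitz_on_add lipschitz_on_cmult lipschitz_on_id
          closest_point_residual_nonexpansive assms)
  then show ?thesis
    using assms(4) by (simp add: algebra_simps)
qed

lemma closest_point_cball_0:
  fixes x :: "'a::{real_inner,heine_borel}"
  assumes "0 \<le> r"
  shows "closest_point (cball 0 r) x = (if norm x \<le> r then x else (r / norm x) *\<^sub>R x)"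
proof (cases "norm x \<le> r")
  case False
  let ?p = "(r / norm x) *\<^sub>R x"
  have "?p = closest_point (cball 0 r) x"
  proof (rule closest_point_unique)
    show "?p \<in> cball 0 r"
      using assms False by simp
    have "dist x ?p = norm ((1 - r / norm x) *\<^sub>R x)"
      by (simp add: dist_norm scaleR_diff_left)
    also have "\<dots> = \<bar>1 - r / norm x\<bar> * norm x"
      by (rule norm_scaleR)
    also have "\<dots> = norm x - r"
      using assms False by (subst abs_of_nonneg) (auto simp: field_simps divide_le_eq_1)
    finally have "dist x ?p = norm x - r" .
    then show "\<forall>z\<in>cball 0 r. dist x ?p \<le> dist x z"
      by (smt (verit) dist_norm mem_cball_0 norm_triangle_ineq2)
  qed auto
  with False show ?thesis by simp
qed (simp add: closest_point_self)

lemma GDERIV_affine_norm_power2: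
  "GDERIV (\<lambda>y::'a::real_inner. a + c * (norm y)\<^sup>2) x :> (2 * c) *\<^sub>R x"
  unfolding gderiv_def power2_norm_eq_inner
  by (auto intro!: derivative_eq_intros simp: inner_commute algebra_simps)

lemma GDERIV_half_square_norm_minus:
  fixes x :: "'a::real_inner"
  assumes "x \<noteq> 0"
  shows "GDERIV (\<lambda>y. 1 / 2 * (norm y - s)\<^sup>2) x :> (1 - s / norm x) *\<^sub>R x"
proof -
  have "GDERIV (\<lambda>y. 1 / 2 * (norm y - s)\<^sup>2) x :> (norm x - s) *\<^sub>R sgn x"
    using GDERIV_norm[OF assms] unfolding gderiv_def
    by (auto intro!: derivative_eq_intros simp: field_simps inner_diff_right)
  then show ?thesis
    using assms by (simp add: sgn_div_norm field_simps)
qed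

lemma has_derivative_glue:
  fixes f q1 q2 :: "'a::real_normed_vector \<Rightarrow> 'b::real_normed_vector"
  assumes "(q1 has_derivative D) (at x)" and "(q2 has_derivative D) (at x)"
    and "q1 x = f x" "q2 x = f x" and "\<And>y. f y = q1 y \<or> f y = q2 y"
  shows "(f has_derivative D) (at x)"
proof -
  let ?rem = "\<lambda>q h. norm (q (x + h) - q x - D h) / norm h"
  have "bounded_linear D" and "(?rem q1 \<longlongrightarrow> 0) (at 0)" and "(?rem q2 \<longlongrightarrow> 0) (at 0)"
    using assms(1,2) unfolding has_derivative_at by auto
  moreover have "(?rem f \<longlongrightarrow> 0) (at 0)"
  proof (rule Lim_null_comparison)
    show "\<forall>\<^sub>F h in at 0. norm (?rem f h) \<le> ?rem q1 h + ?rem q2 h"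
      using assms(3-5) by (intro always_eventually allI) (metis abs_of_nonneg add_increasing
          add_increasing2 divide_nonneg_nonneg norm_ge_zero order_refl real_norm_def)
    show "((\<lambda>h. ?rem q1 h + ?rem q2 h) \<longlongrightarrow> 0) (at 0)"
      using tendsto_add[OF calculation(2,3)] by simp
  qed
  ultimately show ?thesis
    unfolding has_derivative_at by auto
qed

definition g_eps_grad :: "real \<Rightarrow> real \<Rightarrow> complex \<Rightarrow> complex" where
  "g_eps_grad \<epsilon> b x = x - (1 / \<epsilon>) *\<^sub>R closest_point (cball 0 (\<epsilon> * sqrt b)) x"

lemma g_eps_grad_eq:
  assumes "0 < \<epsilon>" "0 \<le> b"
  shows "g_eps_grad \<epsilon> b x =
    (if norm x \<le> \<epsilon> * sqrt b then (1 - 1 / \<epsilon>) *\<^sub>R x else (1 - sqrt b / norm x) *\<^sub>R x)"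
  using assms by (simp add: g_eps_grad_def closest_point_cball_0 algebra_simps)

lemma lipschitz_on_g_eps_grad:
  assumes "0 < \<epsilon>" "\<epsilon> \<le> 1" "0 \<le> b"
  shows "(2 / \<epsilon> - 1)-lipschitz_on UNIV (g_eps_grad \<epsilon> b)"
proof -
  have "(2 * (1 / \<epsilon>) - 1)-lipschitz_on UNIV (g_eps_grad \<epsilon> b)"
    unfolding g_eps_grad_def
    by (rule lipschitz_on_id_minus_scaled_closest_point) (use assms in \<open>auto simp: not_less\<close>)
  then show ?thesis by simp
qed

lemma GDERIV_g_eps_inner_piece:
  assumes "0 < \<epsilon>"
  shows "GDERIV (\<lambda>y::'a::real_inner. (1 - \<epsilon>) / 2 * (b - 1 / \<epsilon> * (norm y)\<^sup>2)) x
           :> (1 - 1 / \<epsilon>) *\<^sub>R x"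
proof -
  have "(\<lambda>y::'a. (1 - \<epsilon>) / 2 * (b - 1 / \<epsilon> * (norm y)\<^sup>2))
          = (\<lambda>y. (1 - \<epsilon>) / 2 * b + (- (1 - \<epsilon>) / (2 * \<epsilon>)) * (norm y)\<^sup>2)"
    using assms by (simp add: fun_eq_iff field_simps)
  moreover have "2 * (- (1 - \<epsilon>) / (2 * \<epsilon>)) = 1 - 1 / \<epsilon>"
    using assms by (simp add: field_simps)
  ultimately show ?thesis
    using GDERIV_affine_norm_power2[of "(1 - \<epsilon>) / 2 * b" "- (1 - \<epsilon>) / (2 * \<epsilon>)" x] by simp
qed

lemma GDERIV_g_eps_inside:
  assumes "0 < \<epsilon>" "norm x < \<epsilon> * sqrt b"
  shows "GDERIV (\<lambda>y. g_eps \<epsilon> y b) x :> (1 - 1 / \<epsilon>) *\<^sub>R x"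
  unfolding gderiv_def
proof (rule has_derivative_transform_within_open[where s = "ball 0 (\<epsilon> * sqrt b)"])
  show "((\<lambda>y. (1 - \<epsilon>) / 2 * (b - 1 / \<epsilon> * (norm y)\<^sup>2)) has_derivative
          (\<lambda>h. h \<bullet> (1 - 1 / \<epsilon>) *\<^sub>R x)) (at x)"
    using GDERIV_g_eps_inner_piece[OF assms(1)] by (simp only: gderiv_def)
qed (use assms in \<open>auto simp: g_eps_def\<close>)

lemma GDERIV_g_eps_outside:
  assumes "0 \<le> \<epsilon> * sqrt b" "\<epsilon> * sqrt b < norm x"
  shows "GDERIV (\<lambda>y. g_eps \<epsilon> y b) x :> (1 - sqrt b / norm x) *\<^sub>R x"
  unfolding gderiv_def
proof (rule has_derivative_transform_within_open[where s = "- cball 0 (\<epsilon> * sqrt b)"])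
  have "x \<noteq> 0"
    using assms by auto
  then show "((\<lambda>y. 1 / 2 * (norm y - sqrt b)\<^sup>2) has_derivative
          (\<lambda>h. h \<bullet> (1 - sqrt b / norm x) *\<^sub>R x)) (at x)"
    using GDERIV_half_square_norm_minus[of x "sqrt b"] by (simp add: gderiv_def)
qed (use assms in \<open>auto simp: g_eps_def\<close>)

lemma GDERIV_g_eps_boundary:
  assumes "0 < \<epsilon>" "0 < b" "norm x = \<epsilon> * sqrt b"
  shows "GDERIV (\<lambda>y. g_eps \<epsilon> y b) x :> (1 - 1 / \<epsilon>) *\<^sub>R x"
  unfolding gderiv_def
proof (rule has_derivative_glue)
  let ?q1 = "\<lambda>y::complex. (1 - \<epsilon>) / 2 * (b - 1 / \<epsilon> * (norm y)\<^sup>2)"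
  let ?q2 = "\<lambda>y::complex. 1 / 2 * (norm y - sqrt b)\<^sup>2"
  have "x \<noteq> 0" "sqrt b / norm x = 1 / \<epsilon>"
    using assms by auto
  show "(?q1 has_derivative (\<lambda>h. h \<bullet> (1 - 1 / \<epsilon>) *\<^sub>R x)) (at x)"
    using GDERIV_g_eps_inner_piece[OF assms(1)] by (simp only: gderiv_def)
  show "(?q2 has_derivative (\<lambda>h. h \<bullet> (1 - 1 / \<epsilon>) *\<^sub>R x)) (at x)"
    using GDERIV_half_square_norm_minus[OF \<open>x \<noteq> 0\<close>, of "sqrt b"] \<open>sqrt b / norm x = 1 / \<epsilon>\<close>
    by (simp add: gderiv_def)
  show "?q2 x = g_eps \<epsilon> x b"
    using assms(3) by (simp add: g_eps_def)
  have "(1 - \<epsilon>) / 2 * ((sqrt b)\<^sup>2 - 1 / \<epsilon> * (\<epsilon> * sqrt b)\<^sup>2) = 1 / 2 * (\<epsilon> * sqrt b - sqrt b)\<^sup>2"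
    using assms(1) by (simp add: power2_eq_square field_simps)
  then show "?q1 x = g_eps \<epsilon> x b"
    using assms by (simp add: g_eps_def)
  show "g_eps \<epsilon> y b = ?q1 y \<or> g_eps \<epsilon> y b = ?q2 y" for y
    by (simp add: g_eps_def)
qed

lemma GDERIV_g_eps:
  assumes "0 < \<epsilon>" "0 \<le> b"
  shows "GDERIV (\<lambda>y. g_eps \<epsilon> y b) x :> g_eps_grad \<epsilon> b x"
proof -
  have r: "0 \<le> \<epsilon> * sqrt b"
    using assms by simp
  consider "norm x < \<epsilon> * sqrt b" | "\<epsilon> * sqrt b < norm x"
    | "norm x = \<epsilon> * sqrt b" "0 < b" | "x = 0" "b = 0"
    using assms by (cases "b = 0"; cases "norm x" "\<epsilon> * sqrt b" rule: linorder_cases) auto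
  then show ?thesis
  proof cases
    case 4
    then have "(\<lambda>y. g_eps \<epsilon> y b) = (\<lambda>y. 1 / 2 * (norm y - sqrt b)\<^sup>2)"
      by (simp add: g_eps_def fun_eq_iff)
    moreover have "GDERIV (\<lambda>y::complex. 0 + 1 / 2 * (norm y)\<^sup>2) 0 :> 0"
      using GDERIV_affine_norm_power2[of 0 "1 / 2" 0] by simp
    ultimately show ?thesis
      using 4 assms by (simp add: g_eps_grad_eq)
  qed (use assms r GDERIV_g_eps_inside GDERIV_g_eps_outside GDERIV_g_eps_boundary
        in \<open>simp_all add: g_eps_grad_eq\<close>)
qed

lemma GDERIV_sum_vec_nth:
  fixes h :: "'n::finite \<Rightarrow> 'a::real_inner \<Rightarrow> real"
  assumes "\<And>j. GDERIV (h j) (z $ j) :> d j"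
  shows "GDERIV (\<lambda>w. \<Sum>j\<in>UNIV. h j (w $ j)) z :> (\<chi> j. d j)"
proof -
  have "((\<lambda>w. \<Sum>j\<in>UNIV. h j (w $ j)) has_derivative (\<lambda>v. \<Sum>j\<in>UNIV. inner (v $ j) (d j))) (at z)"
  proof (rule has_derivative_sum)
    fix j
    show "((\<lambda>w. h j (w $ j)) has_derivative (\<lambda>v. inner (v $ j) (d j))) (at z)"
      using has_derivative_compose[OF bounded_linear_imp_has_derivative[OF bounded_linear_vec_nth]
          assms[unfolded gderiv_def]] by simp
  qed
  then show ?thesis
    by (simp add: gderiv_def inner_vec_def)
qed

lemma lipschitz_on_vec_lambda:
  fixes h :: "'n::finite \<Rightarrow> 'a::real_normed_vector \<Rightarrow> 'b::real_normed_vector"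
  assumes "\<And>j. L-lipschitz_on UNIV (h j)"
  shows "L-lipschitz_on UNIV (\<lambda>x. \<chi> j. h j (x $ j))"
proof (rule lipschitz_onI)
  show "0 \<le> L"
    using lipschitz_on_nonneg[OF assms] .
  fix x y :: "'a ^ 'n"
  have "dist (\<chi> j. h j (x $ j)) (\<chi> j. h j (y $ j)) = L2_set (\<lambda>j. dist (h j (x $ j)) (h j (y $ j))) UNIV"
    by (simp add: dist_vec_def)
  also have "\<dots> \<le> L2_set (\<lambda>j. L * dist (x $ j) (y $ j)) UNIV"
    by (rule L2_set_mono) (simp_all add: lipschitz_onD[OF assms])
  also have "\<dots> = L * dist x y"
    by (simp add: dist_vec_def L2_set_right_distrib[OF \<open>0 \<le> L\<close>])
  finally show "dist (\<chi> j. h j (x $ j)) (\<chi> j. h j (y $ j)) \<le> L * dist x y" .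
qed

theorem lemma2p1:
  fixes \<epsilon> :: real and f :: "real ^ 'm::finite"
  assumes "0 < \<epsilon>" and "\<epsilon> < 1"
    and "\<forall>j. 0 \<le> f $ j"
  shows "\<exists>grad :: complex ^ 'm \<Rightarrow> complex ^ 'm.
           (\<forall>z. GDERIV (\<lambda>w. G_eps \<epsilon> w f) z :> grad z)
         \<and> continuous_on UNIV grad
         \<and> (\<forall>z y. norm (grad z - grad y) \<le> (2 / \<epsilon> - 1) * norm (z - y))"
proof -
  define grad where "grad z = (\<chi> j. g_eps_grad \<epsilon> (f $ j) (z $ j))" for z :: "complex ^ 'm"
  have "GDERIV (\<lambda>w. G_eps \<epsilon> w f) z :> grad z" for z
    unfolding G_eps_def grad_def
    by (rule GDERIV_sum_vec_nth) (use GDERIV_g_eps assms in auto)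
  moreover have lip: "(2 / \<epsilon> - 1)-lipschitz_on UNIV grad"
    unfolding grad_def
    by (rule lipschitz_on_vec_lambda) (use lipschitz_on_g_eps_grad assms in auto)
  moreover have "norm (grad z - grad y) \<le> (2 / \<epsilon> - 1) * norm (z - y)" for z y
    using lipschitz_onD[OF lip] by (simp add: dist_norm)
  ultimately show ?thesis
    using lipschitz_on_continuous_on by blast
qed

end
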